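(* Let $L$ be an interval locale and $E$ a presheaf on $L_{+}$. Then the composite morphism $E\to\operatorname{Im}(E)\to L(\operatorname{Im}(E))$ is initial among all presheaf maps $E\to F$ with $F$ a sheaf of monomorphisms on $L_{+}$.
   Context: A locale $L$ is a complete lattice in which finite meets distribute over arbitrary joins, with Grothendieck topology: $\{b_j\le a\}$ covers $a$ iff $\bigvee_j b_j=a$. $L$ is an interval if it is totally ordered and densely ordered. $i$ is the bottom element of $L$; $L_{+}=L\sqcup\{0\}$ with a new bottom $0<i$. A sheaf of monomorphisms on $L_{+}$ is a sheaf $F$ with $F(b)\to F(a)$ injective for all $a\le b$ in $L$. For a presheaf $E$ on $L_{+}$, $\operatorname{Im}(E)(s)$ is the image of $E(s)\to E(i)$ for $s\in L$, $\operatorname{Im}(E)(0)=\ast$. For a presheaf $F$ on $L_{+}$, $LF(a)=\varprojlim_{0<b<a}F(b)$ for $a\in L$, $a\neq i$, $LF(i)=F(i)$, $LF(0)=\ast$; $\eta:F\to LF$ is the canonical map. *)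

theory Defs
  imports Main "HOL-Library.Option_ord"
begin

text \<open>Presheaves of sets on a poset 'p (viewed as a category), with values in a carrier
type 'x. ob F a is the set F(a); res F b a : F(b) \<rightarrow> F(a) is the restriction for a \<le> b.\<close>

record ('p, 'x) psh =
  ob  :: "'p \<Rightarrow> 'x set"
  res :: "'p \<Rightarrow> 'p \<Rightarrow> 'x \<Rightarrow> 'x"

definition presheaf :: "('p::order, 'x) psh \<Rightarrow> bool" where
  "presheaf F \<longleftrightarrow>
     (\<forall>a b x. a \<le> b \<and> x \<in> ob F b \<longrightarrow> res F b a x \<in> ob F a) \<and>
     (\<forall>a x. x \<in> ob F a \<longrightarrow> res F a a x = x) \<and>
     (\<forall>a b c x. c \<le> b \<and> b \<le> a \<and> x \<in> ob F a \<longrightarrow> res F b c (res F a b x) = res F a c x)"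

definition psh_hom :: "('p::order, 'x) psh \<Rightarrow> ('p, 'y) psh \<Rightarrow> ('p \<Rightarrow> 'x \<Rightarrow> 'y) \<Rightarrow> bool" where
  "psh_hom E F f \<longleftrightarrow>
     (\<forall>a x. x \<in> ob E a \<longrightarrow> f a x \<in> ob F a) \<and>
     (\<forall>a b x. a \<le> b \<and> x \<in> ob E b \<longrightarrow> f a (res E b a x) = res F b a (f b x))"

definition hom_comp :: "('p \<Rightarrow> 'y \<Rightarrow> 'z) \<Rightarrow> ('p \<Rightarrow> 'x \<Rightarrow> 'y) \<Rightarrow> ('p \<Rightarrow> 'x \<Rightarrow> 'z)" where
  "hom_comp g f = (\<lambda>a x. g a (f a x))"

definition is_sheaf :: "('p::complete_lattice, 'x) psh \<Rightarrow> bool" where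
  "is_sheaf F \<longleftrightarrow> presheaf F \<and>
     (\<forall>a B s. B \<subseteq> {b. b \<le> a} \<and> Sup B = a \<and>
        (\<forall>b\<in>B. s b \<in> ob F b) \<and>
        (\<forall>b\<in>B. \<forall>c\<in>B. res F b (inf b c) (s b) = res F c (inf b c) (s c))
        \<longrightarrow> (\<exists>!x. x \<in> ob F a \<and> (\<forall>b\<in>B. res F a b x = s b)))"

text \<open>L_+ is modelled as 'l option (HOL-Library.Option_ord): None is the new bottom 0,
Some a corresponds to a \<in> L; Some bot is i.\<close>

definition sheaf_of_monos :: "('l::complete_lattice option, 'x) psh \<Rightarrow> bool" where
  "sheaf_of_monos F \<longleftrightarrow> is_sheaf F \<and>
     (\<forall>a b. a \<le> b \<longrightarrow> inj_on (res F (Some b) (Some a)) (ob F (Some b)))"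

definition Im :: "('l::complete_lattice option, 'x) psh \<Rightarrow> ('l option, 'x) psh" where
  "Im E = \<lparr> ob = (\<lambda>s. case s of None \<Rightarrow> {undefined}
                             | Some t \<Rightarrow> res E (Some t) (Some bot) ` ob E (Some t)),
            res = (\<lambda>b a x. case a of None \<Rightarrow> undefined | Some _ \<Rightarrow> x) \<rparr>"

definition Im_map :: "('l::complete_lattice option, 'x) psh \<Rightarrow> 'l option \<Rightarrow> 'x \<Rightarrow> 'x" where
  "Im_map E = (\<lambda>s x. case s of None \<Rightarrow> undefined | Some t \<Rightarrow> res E (Some t) (Some bot) x)"

text \<open>LF(a) = lim_{0<b<a} F(b) for a \<in> L, a \<noteq> i (compatible families indexed by the
b \<in> L with b < a, extended by undefined elsewhere); LF(i) = F(i); LF(0) a singleton.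
Carrier: Inl for elements of F(i) (and the point of LF(0)), Inr for compatible families.\<close>
definition compat_fams :: "('l::complete_lattice option, 'x) psh \<Rightarrow> 'l \<Rightarrow> ('l \<Rightarrow> 'x) set" where
  "compat_fams F a = {s. (\<forall>b. b < a \<longrightarrow> s b \<in> ob F (Some b)) \<and>
                         (\<forall>b. \<not> b < a \<longrightarrow> s b = undefined) \<and>
                         (\<forall>b c. c \<le> b \<and> b < a \<longrightarrow> res F (Some b) (Some c) (s b) = s c)}"

definition Lsh :: "('l::complete_lattice option, 'x) psh \<Rightarrow> ('l option, 'x + ('l \<Rightarrow> 'x)) psh" where
  "Lsh F = \<lparr> ob = (\<lambda>s. case s of None \<Rightarrow> {Inl undefined}
                             | Some a \<Rightarrow> if a = bot then Inl ` ob F (Some bot)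
                                         else Inr ` compat_fams F a),
            res = (\<lambda>b a y. case a of None \<Rightarrow> Inl undefined
                     | Some c \<Rightarrow> (case y of Inl x \<Rightarrow> Inl x
                                  | Inr s \<Rightarrow> if c = bot then Inl (s bot)
                                            else Inr (\<lambda>d. if d < c then s d else undefined))) \<rparr>"

definition eta :: "('l::complete_lattice option, 'x) psh \<Rightarrow> 'l option \<Rightarrow> 'x \<Rightarrow> 'x + ('l \<Rightarrow> 'x)" where
  "eta F = (\<lambda>s x. case s of None \<Rightarrow> Inl undefined
                 | Some a \<Rightarrow> if a = bot then Inl x
                             else Inr (\<lambda>b. if b < a then res F (Some a) (Some b) x else undefined))"

text \<open>Interval locale: totally and densely ordered complete lattice (a complete chain is
automatically a frame).\<close>
definition dense_ordered :: "'l::order itself \<Rightarrow> bool" where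
  "dense_ordered _ \<longleftrightarrow> (\<forall>x y::'l. x < y \<longrightarrow> (\<exists>z. x < z \<and> z < y))"

end

theory Submission
  imports Defs
begin

text \<open>Since the restrictions of \<open>Im E\<close> are inclusions, a compatible family in \<open>L(Im E)(t)\<close> is
constant: it is determined by its germ, an element of \<open>E(i)\<close> that extends to every \<open>d < t\<close>.
In a sheaf of monomorphisms \<open>F\<close> a section over \<open>t\<close> is determined by its germ in \<open>F(i)\<close>,
and on an interval every \<open>t \<noteq> i\<close> is covered by the \<open>d < t\<close>; gluing the unique extensions to
those \<open>d\<close> shows that a germ extending below \<open>t\<close> extends to \<open>t\<close>. So \<open>f\<close> factors uniquely, by
sending a germ \<open>v\<close> over \<open>t\<close> to the section of \<open>F(t)\<close> with germ \<open>f(v)\<close>.\<close>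

lemma presheafD:
  assumes "presheaf F"
  shows presheaf_res_mem: "a \<le> b \<Longrightarrow> x \<in> ob F b \<Longrightarrow> res F b a x \<in> ob F a"
    and presheaf_res_id: "x \<in> ob F a \<Longrightarrow> res F a a x = x"
    and presheaf_res_trans: "c \<le> b \<Longrightarrow> b \<le> a \<Longrightarrow> x \<in> ob F a \<Longrightarrow> res F b c (res F a b x) = res F a c x"
  using assms unfolding presheaf_def by blast+

lemma psh_homD:
  assumes "psh_hom E F f"
  shows psh_hom_mem: "x \<in> ob E a \<Longrightarrow> f a x \<in> ob F a"
    and psh_hom_natural: "a \<le> b \<Longrightarrow> x \<in> ob E b \<Longrightarrow> f a (res E b a x) = res F b a (f b x)"
  using assms unfolding psh_hom_def by blast+

lemma is_sheaf_glue:
  assumes "is_sheaf F" and "B \<subseteq> {b. b \<le> a}" and "Sup B = a" and "\<forall>b\<in>B. s b \<in> ob F b"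
    and "\<forall>b\<in>B. \<forall>c\<in>B. res F b (inf b c) (s b) = res F c (inf b c) (s c)"
  shows "\<exists>!x. x \<in> ob F a \<and> (\<forall>b\<in>B. res F a b x = s b)"
proof -
  have "\<forall>a B s. B \<subseteq> {b. b \<le> a} \<and> Sup B = a \<and> (\<forall>b\<in>B. s b \<in> ob F b) \<and>
      (\<forall>b\<in>B. \<forall>c\<in>B. res F b (inf b c) (s b) = res F c (inf b c) (s c))
      \<longrightarrow> (\<exists>!x. x \<in> ob F a \<and> (\<forall>b\<in>B. res F a b x = s b))"
    using assms(1) unfolding is_sheaf_def by (rule conjunct2)
  then show ?thesis using assms(2-5) by (elim allE[of _ a] allE[of _ B] allE[of _ s]) simp
qed

lemma sheaf_ob_bot_singleton:
  assumes "is_sheaf (F :: ('p::complete_lattice, 'x) psh)"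
  shows "\<exists>z. ob F bot = {z}"
  using is_sheaf_glue[OF assms, of "{}" bot] by auto

lemma Sup_option_eq_Some:
  assumes "Sup B = Some t"
  shows "Option.these B \<noteq> {}" and "Sup (Option.these B) = t"
proof -
  have "\<not> (B = {} \<or> B = {None})" and Sup_these: "Some (Sup (Option.these B)) = Some t"
    using assms by (auto simp: Sup_option_def split: if_splits)
  then show "Option.these B \<noteq> {}"
    by (metis empty_iff in_these_eq insertCI not_None_eq subsetI subset_singletonD)
  show "Sup (Option.these B) = t" using Sup_these by simp
qed

definition const_fam :: "'l::complete_linorder \<Rightarrow> 'x \<Rightarrow> 'l \<Rightarrow> 'x" where
  "const_fam t v = (\<lambda>d. if d < t then v else undefined)"

definition Lsh_elem :: "'l::complete_linorder \<Rightarrow> 'x \<Rightarrow> 'x + ('l \<Rightarrow> 'x)" where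
  "Lsh_elem t v = (if t = bot then Inl v else Inr (const_fam t v))"

definition germ :: "'x + ('l::complete_linorder \<Rightarrow> 'x) \<Rightarrow> 'x" where
  "germ y = (case y of Inl v \<Rightarrow> v | Inr s \<Rightarrow> s bot)"

definition germs_below :: "('l::complete_linorder option, 'x) psh \<Rightarrow> 'l \<Rightarrow> 'x set" where
  "germs_below F t = (\<Inter>d \<in> insert bot {..<t}. ob (Im F) (Some d))"

lemma germ_Lsh_elem [simp]: "germ (Lsh_elem t v) = v"
  by (auto simp: germ_def Lsh_elem_def const_fam_def bot.not_eq_extremum)

lemma Lsh_elem_inject: "Lsh_elem t u = Lsh_elem t v \<Longrightarrow> u = v"
  by (metis germ_Lsh_elem)

lemma ob_Im_Some: "ob (Im E) (Some t) = res E (Some t) (Some bot) ` ob E (Some t)"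
  by (simp add: Im_def)

lemma res_Im_Some [simp]: "res (Im E) b (Some c) x = x"
  by (simp add: Im_def)

lemma ob_Lsh_None [simp]: "ob (Lsh G) None = {Inl undefined}"
  by (simp add: Lsh_def)

lemma res_Lsh_None [simp]: "res (Lsh G) b None y = Inl undefined"
  by (simp add: Lsh_def)

lemma germs_below_antimono: "c \<le> t \<Longrightarrow> germs_below E t \<subseteq> germs_below E c"
  by (auto simp: germs_below_def dest: less_le_trans)

lemma germs_below_Sup:
  assumes "S \<noteq> {}"
  shows "germs_below E (Sup S) = (\<Inter>b\<in>S. germs_below E b)"
proof -
  have "insert bot {..<Sup S} = (\<Union>b\<in>S. insert bot {..<b})"
    using assms less_Sup_iff[of _ S] by blast
  then show ?thesis unfolding germs_below_def by blast
qed

lemma compat_fams_Im: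
  assumes "t \<noteq> bot"
  shows "compat_fams (Im E) t = const_fam t ` germs_below E t"
proof (intro equalityI subsetI)
  fix s assume s: "s \<in> compat_fams (Im E) t"
  have const: "s d = s bot" if "d < t" for d
    using s that by (simp add: compat_fams_def)
  have "s = const_fam t (s bot)"
    using s const by (auto simp: compat_fams_def const_fam_def)
  moreover have "s bot \<in> germs_below E t"
  proof -
    have "s d \<in> ob (Im E) (Some d)" if "d < t" for d
      using s that by (simp add: compat_fams_def)
    moreover have "bot < t" using assms by (simp add: bot.not_eq_extremum)
    ultimately show ?thesis using const unfolding germs_below_def by (metis INT_I insertE lessThan_iff)
  qed
  ultimately show "s \<in> const_fam t ` germs_below E t" by blast
qed (auto simp: compat_fams_def const_fam_def germs_below_def)

lemma ob_Lsh_Im_Some: "ob (Lsh (Im E)) (Some t) = Lsh_elem t ` germs_below E t"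
  by (cases "t = bot") (auto simp: Lsh_def Lsh_elem_def germs_below_def compat_fams_Im image_image)

lemma ob_Lsh_Im_SomeE:
  assumes "y \<in> ob (Lsh (Im E)) (Some t)"
  shows "y = Lsh_elem t (germ y)" and "germ y \<in> germs_below E t"
  using assms by (auto simp: ob_Lsh_Im_Some)

lemma res_Lsh_elem:
  assumes "c \<le> t"
  shows "res (Lsh G) (Some t) (Some c) (Lsh_elem t v) = Lsh_elem c v"
proof -
  have "(\<lambda>d. if d < c then const_fam t v d else undefined) = const_fam c v"
    using assms by (auto simp: const_fam_def fun_eq_iff dest: less_le_trans)
  then show ?thesis
    using assms bot_unique[of c]
    by (auto simp: Lsh_def Lsh_elem_def bot.not_eq_extremum, simp add: const_fam_def)
qed

lemma res_Lsh_Im: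
  assumes "c \<le> t" and "y \<in> ob (Lsh (Im E)) (Some t)"
  shows "res (Lsh (Im E)) (Some t) (Some c) y = Lsh_elem c (germ y)"
  using assms by (metis ob_Lsh_Im_SomeE(1) res_Lsh_elem)

lemma presheaf_Lsh_Im: "presheaf (Lsh (Im (E :: ('l::complete_linorder option, 'x) psh)))"
  unfolding presheaf_def
proof (intro conjI allI impI)
  fix a b x assume "a \<le> b \<and> x \<in> ob (Lsh (Im E)) b"
  then show "res (Lsh (Im E)) b a x \<in> ob (Lsh (Im E)) a"
    by (cases a; cases b)
      (auto simp: res_Lsh_Im ob_Lsh_Im_Some dest!: germs_below_antimono[of _ _ E])
next
  fix a x assume "x \<in> ob (Lsh (Im E)) a"
  then show "res (Lsh (Im E)) a a x = x"
    by (cases a) (auto simp: res_Lsh_Im ob_Lsh_Im_Some)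
next
  fix a b c x assume "c \<le> b \<and> b \<le> a \<and> x \<in> ob (Lsh (Im E)) a"
  then show "res (Lsh (Im E)) b c (res (Lsh (Im E)) a b x) = res (Lsh (Im E)) a c x"
    by (cases a; cases b; cases c) (auto simp: res_Lsh_Im ob_Lsh_Im_Some res_Lsh_elem)
qed

lemma Lsh_Im_glue:
  fixes E :: "('l::complete_linorder option, 'x) psh"
  defines "L \<equiv> Lsh (Im E)"
  assumes below: "B \<subseteq> {b. b \<le> Some t}" and cover: "Sup B = Some t"
    and sec: "\<forall>b\<in>B. s b \<in> ob L b"
    and compat: "\<forall>b\<in>B. \<forall>c\<in>B. res L b (inf b c) (s b) = res L c (inf b c) (s c)"
  shows "\<exists>!x. x \<in> ob L (Some t) \<and> (\<forall>b\<in>B. res L (Some t) b x = s b)"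
proof -
  obtain b0 where b0: "Some b0 \<in> B"
    using Sup_option_eq_Some(1)[OF cover] by (auto simp: in_these_eq)
  define v where "v = germ (s (Some b0))"
  have s_Some: "s (Some b) = Lsh_elem b v" if b: "Some b \<in> B" for b
  proof -
    have "Lsh_elem (inf b b0) (germ (s (Some b))) = Lsh_elem (inf b b0) v"
      using compat b b0 sec res_Lsh_Im[of "inf b b0" _ _ E] unfolding L_def v_def
      by (metis inf_Some inf_le1 inf_le2)
    then show ?thesis
      using sec b ob_Lsh_Im_SomeE(1) unfolding L_def by (metis Lsh_elem_inject)
  qed
  have "v \<in> germs_below E (Sup (Option.these B))"
    using Sup_option_eq_Some(1)[OF cover] s_Some sec ob_Lsh_Im_SomeE(2)
    unfolding germs_below_Sup[OF Sup_option_eq_Some(1)[OF cover]] L_def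
    by (fastforce simp: in_these_eq)
  then have v: "Lsh_elem t v \<in> ob L (Some t)"
    using Sup_option_eq_Some(2)[OF cover] by (simp add: L_def ob_Lsh_Im_Some)
  show ?thesis
  proof (rule ex1I[of _ "Lsh_elem t v"], intro conjI ballI)
    fix b assume "b \<in> B"
    then show "res L (Some t) b (Lsh_elem t v) = s b"
      using below sec s_Some by (cases b) (auto simp: L_def res_Lsh_elem)
  next
    fix x assume x: "x \<in> ob L (Some t) \<and> (\<forall>b\<in>B. res L (Some t) b x = s b)"
    then have "Lsh_elem b0 (germ x) = Lsh_elem b0 v"
      using b0 below s_Some res_Lsh_Im[of b0 t x E] unfolding L_def by auto
    then show "x = Lsh_elem t v"
      using x ob_Lsh_Im_SomeE(1) unfolding L_def by (metis Lsh_elem_inject)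
  qed (rule v)
qed

lemma sheaf_of_monos_Lsh_Im:
  "sheaf_of_monos (Lsh (Im (E :: ('l::complete_linorder option, 'x) psh)))"
  unfolding sheaf_of_monos_def is_sheaf_def
proof (intro conjI allI impI presheaf_Lsh_Im)
  fix a b :: 'l assume "a \<le> b"
  then show "inj_on (res (Lsh (Im E)) (Some b) (Some a)) (ob (Lsh (Im E)) (Some b))"
    by (auto intro!: inj_onI simp: res_Lsh_Im ob_Lsh_Im_Some dest: Lsh_elem_inject)
next
  fix a B s
  assume H: "B \<subseteq> {b. b \<le> a} \<and> Sup B = a \<and> (\<forall>b\<in>B. s b \<in> ob (Lsh (Im E)) b) \<and>
    (\<forall>b\<in>B. \<forall>c\<in>B. res (Lsh (Im E)) b (inf b c) (s b) = res (Lsh (Im E)) c (inf b c) (s c))"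
  show "\<exists>!x. x \<in> ob (Lsh (Im E)) a \<and> (\<forall>b\<in>B. res (Lsh (Im E)) a b x = s b)"
  proof (cases a)
    case None
    then have "\<forall>b\<in>B. b = None" using H less_eq_option_None_is_None by blast
    then have "\<forall>b\<in>B. res (Lsh (Im E)) a b (Inl undefined) = s b"
      using H by (metis ob_Lsh_None res_Lsh_None singletonD)
    then show ?thesis using None by (intro ex1I[of _ "Inl undefined"]) auto
  next
    case (Some t)
    then show ?thesis using H Lsh_Im_glue[of B t s E] by blast
  qed
qed

lemma unit_Some:
  "hom_comp (eta (Im E)) (Im_map E) (Some t) x = Lsh_elem t (res E (Some t) (Some bot) x)"
  by (auto simp: hom_comp_def eta_def Im_map_def Lsh_elem_def const_fam_def)

lemma unit_None: "hom_comp (eta (Im E)) (Im_map E) None x = Inl undefined"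
  by (simp add: hom_comp_def eta_def)

lemma res_bot_mem_germs_below:
  assumes E: "presheaf E" and x: "x \<in> ob E (Some t)"
  shows "res E (Some t) (Some bot) x \<in> germs_below E t"
  unfolding germs_below_def ob_Im_Some
proof
  fix d assume "d \<in> insert bot {..<t}"
  then have dt: "d \<le> t" by auto
  have "res E (Some t) (Some bot) x = res E (Some d) (Some bot) (res E (Some t) (Some d) x)"
    using presheaf_res_trans[OF E, of "Some bot" "Some d" "Some t" x] x dt by simp
  moreover have "res E (Some t) (Some d) x \<in> ob E (Some d)"
    using presheaf_res_mem[OF E, of "Some d" "Some t" x] x dt by simp
  ultimately show "res E (Some t) (Some bot) x \<in> res E (Some d) (Some bot) ` ob E (Some d)"
    by blast
qed

lemma psh_hom_unit:
  assumes E: "presheaf (E :: ('l::complete_linorder option, 'x) psh)"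
  shows "psh_hom E (Lsh (Im E)) (hom_comp (eta (Im E)) (Im_map E))"
  unfolding psh_hom_def
proof (intro conjI allI impI)
  fix a x assume "x \<in> ob E a"
  then show "hom_comp (eta (Im E)) (Im_map E) a x \<in> ob (Lsh (Im E)) a"
    using res_bot_mem_germs_below[OF E]
    by (cases a) (auto simp: unit_None unit_Some ob_Lsh_Im_Some)
next
  fix a b x assume h: "a \<le> b \<and> x \<in> ob E b"
  show "hom_comp (eta (Im E)) (Im_map E) a (res E b a x) =
        res (Lsh (Im E)) b a (hom_comp (eta (Im E)) (Im_map E) b x)"
  proof (cases a)
    case (Some c)
    then obtain t where b: "b = Some t" and ct: "c \<le> t" using h by (cases b) auto
    have "res E (Some c) (Some bot) (res E (Some t) (Some c) x) = res E (Some t) (Some bot) x"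
      using presheaf_res_trans[OF E, of "Some bot" "Some c" "Some t" x] h b ct by simp
    then show ?thesis using Some b by (simp add: unit_Some res_Lsh_elem[OF ct])
  qed (simp add: unit_None)
qed

lemma sheaf_of_monos_presheaf: "sheaf_of_monos F \<Longrightarrow> presheaf F"
  by (simp add: sheaf_of_monos_def is_sheaf_def)

lemma sheaf_of_monos_ob_None:
  assumes "sheaf_of_monos (F :: ('l::complete_linorder option, 'x) psh)"
  shows "ob F None = {the_elem (ob F None)}"
  using sheaf_ob_bot_singleton[of F] assms
  by (auto simp: sheaf_of_monos_def bot_option_def)

lemma sheaf_of_monos_germ_inj:
  assumes "sheaf_of_monos F" and "z \<in> ob F (Some t)" and "z' \<in> ob F (Some t)"
    and "res F (Some t) (Some bot) z = res F (Some t) (Some bot) z'"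
  shows "z = z'"
  using assms unfolding sheaf_of_monos_def by (meson bot.extremum inj_onD)

definition section_with_germ :: "('l::complete_linorder option, 'x) psh \<Rightarrow> 'l \<Rightarrow> 'x \<Rightarrow> 'x" where
  "section_with_germ F t w = (THE z. z \<in> ob F (Some t) \<and> res F (Some t) (Some bot) z = w)"

lemma section_with_germ_eq:
  assumes "sheaf_of_monos F" and "z \<in> ob F (Some t)"
  shows "section_with_germ F t (res F (Some t) (Some bot) z) = z"
  unfolding section_with_germ_def
  using assms sheaf_of_monos_germ_inj[OF assms(1)] by (intro the_equality) auto

lemma section_with_germ:
  assumes "sheaf_of_monos F" and "w \<in> ob (Im F) (Some t)"
  shows section_with_germ_mem: "section_with_germ F t w \<in> ob F (Some t)"
    and res_bot_section_with_germ: "res F (Some t) (Some bot) (section_with_germ F t w) = w"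
  using assms section_with_germ_eq[OF assms(1)] by (auto simp: ob_Im_Some)

lemma res_section_with_germ:
  assumes F: "sheaf_of_monos F" and w: "w \<in> ob (Im F) (Some t)" and ct: "c \<le> t"
  shows "res F (Some t) (Some c) (section_with_germ F t w) = section_with_germ F c w"
proof -
  let ?z = "section_with_germ F t w"
  have z: "?z \<in> ob F (Some t)" and germ_z: "res F (Some t) (Some bot) ?z = w"
    using section_with_germ[OF F w] by blast+
  have "res F (Some c) (Some bot) (res F (Some t) (Some c) ?z) = w"
    using presheaf_res_trans[OF sheaf_of_monos_presheaf[OF F], of "Some bot" "Some c" "Some t"] z germ_z ct
    by simp
  moreover have "res F (Some t) (Some c) ?z \<in> ob F (Some c)"
    using presheaf_res_mem[OF sheaf_of_monos_presheaf[OF F]] z ct by simp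
  ultimately show ?thesis
    using section_with_germ_eq[OF F] by metis
qed

lemma Sup_lessThan_dense:
  assumes "dense_ordered TYPE('l::complete_linorder)"
  shows "Sup {..<t} = (t :: 'l)"
proof (rule antisym)
  show "t \<le> Sup {..<t}"
  proof (rule ccontr)
    assume "\<not> t \<le> Sup {..<t}"
    then obtain z where "Sup {..<t} < z" "z < t"
      using assms unfolding dense_ordered_def by (meson not_le)
    then show False by (meson Sup_upper leD lessThan_iff)
  qed
qed (auto intro: Sup_least)

lemma sheaf_of_monos_germs_below:
  assumes dense: "dense_ordered TYPE('l::complete_linorder)"
    and F: "sheaf_of_monos (F :: ('l option, 'x) psh)"
  shows "germs_below F t \<subseteq> ob (Im F) (Some t)"
proof
  fix w assume w: "w \<in> germs_below F t"
  show "w \<in> ob (Im F) (Some t)"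
  proof (cases "t = bot")
    case True
    then show ?thesis using w by (simp add: germs_below_def)
  next
    case False
    then have bt: "bot < t" by (simp add: bot.not_eq_extremum)
    have w_below: "w \<in> ob (Im F) (Some d)" if "d < t" for d
      using w that by (simp add: germs_below_def)
    define B where "B = Some ` {..<t}"
    define s where "s b = section_with_germ F (the b) w" for b
    have cover: "Sup B = Some t"
      using bt Some_Sup[of "{..<t}"] Sup_lessThan_dense[OF dense] unfolding B_def by force
    have compat: "res F (Some d) (Some (inf d d')) (s (Some d)) = res F (Some d') (Some (inf d d')) (s (Some d'))"
      if "d < t" "d' < t" for d d'
      using res_section_with_germ[OF F w_below[OF that(1)], of "inf d d'"]
        res_section_with_germ[OF F w_below[OF that(2)], of "inf d d'"]
      by (simp add: s_def)
    have "\<exists>!z. z \<in> ob F (Some t) \<and> (\<forall>b\<in>B. res F (Some t) b z = s b)"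
      using F cover compat section_with_germ_mem[OF F w_below]
      by (intro is_sheaf_glue) (auto simp: sheaf_of_monos_def B_def s_def)
    then obtain z where z: "z \<in> ob F (Some t)" and "res F (Some t) (Some bot) z = s (Some bot)"
      using bt by (auto simp: B_def)
    moreover have "s (Some bot) = w"
      using section_with_germ_mem[OF F w_below[OF bt]] res_bot_section_with_germ[OF F w_below[OF bt]]
        presheaf_res_id[OF sheaf_of_monos_presheaf[OF F]]
      by (simp add: s_def)
    ultimately show ?thesis by (auto simp: ob_Im_Some)
  qed
qed

lemma psh_hom_germs_below:
  assumes f: "psh_hom E F f" and v: "v \<in> germs_below E t"
  shows "f (Some bot) v \<in> germs_below F t"
  unfolding germs_below_def
proof
  fix d assume "d \<in> insert bot {..<t}"
  then obtain y where y: "y \<in> ob E (Some d)" and "v = res E (Some d) (Some bot) y"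
    using v by (auto simp: germs_below_def ob_Im_Some)
  then have "f (Some bot) v = res F (Some d) (Some bot) (f (Some d) y)"
    using psh_hom_natural[OF f] by simp
  then show "f (Some bot) v \<in> ob (Im F) (Some d)"
    using psh_hom_mem[OF f y] by (simp add: ob_Im_Some)
qed

definition factor ::
    "('l::complete_linorder option, 'y) psh \<Rightarrow> ('l option \<Rightarrow> 'x \<Rightarrow> 'y) \<Rightarrow> 'l option \<Rightarrow> 'x + ('l \<Rightarrow> 'x) \<Rightarrow> 'y"
  where "factor F f a y = (case a of None \<Rightarrow> the_elem (ob F None)
                            | Some t \<Rightarrow> section_with_germ F t (f (Some bot) (germ y)))"

lemma factor_None [simp]: "factor F f None y = the_elem (ob F None)"
  and factor_Some [simp]: "factor F f (Some t) y = section_with_germ F t (f (Some bot) (germ y))"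
  by (simp_all add: factor_def)

lemma germ_factor_image:
  assumes "dense_ordered TYPE('l::complete_linorder)" and "sheaf_of_monos (F :: ('l option, 'y) psh)"
    and "psh_hom E F f" and "y \<in> ob (Lsh (Im E)) (Some t)"
  shows "f (Some bot) (germ y) \<in> ob (Im F) (Some t)"
  using sheaf_of_monos_germs_below[OF assms(1,2)]
    psh_hom_germs_below[OF assms(3) ob_Lsh_Im_SomeE(2)[OF assms(4)]] by blast

lemma psh_hom_factor:
  assumes dense: "dense_ordered TYPE('l::complete_linorder)"
    and F: "sheaf_of_monos (F :: ('l option, 'y) psh)" and f: "psh_hom E F f"
  shows "psh_hom (Lsh (Im E)) F (factor F f)"
  unfolding psh_hom_def
proof (intro conjI allI impI)
  fix a y assume "y \<in> ob (Lsh (Im E)) a"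
  then show "factor F f a y \<in> ob F a"
    using sheaf_of_monos_ob_None[OF F] section_with_germ_mem[OF F germ_factor_image[OF dense F f]]
    by (cases a) auto
next
  fix a b y assume h: "a \<le> b \<and> y \<in> ob (Lsh (Im E)) b"
  show "factor F f a (res (Lsh (Im E)) b a y) = res F b a (factor F f b y)"
  proof (cases a)
    case None
    have "factor F f b y \<in> ob F b"
      using h sheaf_of_monos_ob_None[OF F] section_with_germ_mem[OF F germ_factor_image[OF dense F f]]
      by (cases b) auto
    then have "res F b a (factor F f b y) \<in> ob F None"
      using presheaf_res_mem[OF sheaf_of_monos_presheaf[OF F]] h None by blast
    then show ?thesis using sheaf_of_monos_ob_None[OF F] None by (metis factor_None singletonD)
  next
    case (Some c)
    then obtain t where b: "b = Some t" and ct: "c \<le> t" using h by (cases b) auto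
    then show ?thesis
      using Some h res_section_with_germ[OF F germ_factor_image[OF dense F f] ct]
      by (simp add: res_Lsh_Im)
  qed
qed

lemma factor_unit:
  assumes F: "sheaf_of_monos F" and f: "psh_hom E F f" and x: "x \<in> ob E a"
  shows "hom_comp (factor F f) (hom_comp (eta (Im E)) (Im_map E)) a x = f a x"
proof (cases a)
  case None
  then show ?thesis
    using psh_hom_mem[OF f x] sheaf_of_monos_ob_None[OF F] by (simp add: hom_comp_def) (metis singletonD)
next
  case (Some t)
  have "f (Some bot) (res E (Some t) (Some bot) x) = res F (Some t) (Some bot) (f (Some t) x)"
    using psh_hom_natural[OF f] x Some by simp
  then show ?thesis
    using section_with_germ_eq[OF F psh_hom_mem[OF f]] x Some
    by (simp add: hom_comp_def[of "factor F f"] unit_Some)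
qed

lemma hom_eq_factor:
  assumes E: "presheaf (E :: ('l::complete_linorder option, 'x) psh)" and F: "sheaf_of_monos F"
    and k: "psh_hom (Lsh (Im E)) F k"
    and kf: "\<forall>a x. x \<in> ob E a \<longrightarrow> hom_comp k (hom_comp (eta (Im E)) (Im_map E)) a x = f a x"
    and y: "y \<in> ob (Lsh (Im E)) a"
  shows "k a y = factor F f a y"
proof (cases a)
  case None
  then show ?thesis using psh_hom_mem[OF k y] sheaf_of_monos_ob_None[OF F] by (metis factor_None singletonD)
next
  case (Some t)
  have "germ y \<in> ob (Im E) (Some bot)"
    using ob_Lsh_Im_SomeE(2)[OF y[unfolded Some]] by (simp add: germs_below_def)
  then have v: "germ y \<in> ob E (Some bot)" and res_v: "res E (Some bot) (Some bot) (germ y) = germ y"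
    using presheaf_res_id[OF E] by (auto simp: ob_Im_Some)
  have "res F (Some t) (Some bot) (k (Some t) y) = k (Some bot) (res (Lsh (Im E)) (Some t) (Some bot) y)"
    using psh_hom_natural[OF k] y Some by simp
  also have "\<dots> = k (Some bot) (hom_comp (eta (Im E)) (Im_map E) (Some bot) (germ y))"
    using y Some res_v by (simp add: res_Lsh_Im unit_Some)
  also have "\<dots> = f (Some bot) (germ y)"
    using kf v by (simp add: hom_comp_def[of k])
  finally show ?thesis
    using section_with_germ_eq[OF F psh_hom_mem[OF k y[unfolded Some]]] Some by simp
qed

theorem corollary27:
  fixes E :: "('l::complete_linorder option, 'e) psh"
  assumes "dense_ordered TYPE('l)"
    and "presheaf E"
  shows "sheaf_of_monos (Lsh (Im E)) \<and>
         psh_hom E (Lsh (Im E)) (hom_comp (eta (Im E)) (Im_map E)) \<and>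
         (\<forall>(F :: ('l option, 'y) psh) f. sheaf_of_monos F \<and> psh_hom E F f \<longrightarrow>
            (\<exists>g. psh_hom (Lsh (Im E)) F g \<and>
                 (\<forall>a x. x \<in> ob E a \<longrightarrow> hom_comp g (hom_comp (eta (Im E)) (Im_map E)) a x = f a x)) \<and>
            (\<forall>g h. psh_hom (Lsh (Im E)) F g \<and> psh_hom (Lsh (Im E)) F h \<and>
                 (\<forall>a x. x \<in> ob E a \<longrightarrow> hom_comp g (hom_comp (eta (Im E)) (Im_map E)) a x = f a x) \<and>
                 (\<forall>a x. x \<in> ob E a \<longrightarrow> hom_comp h (hom_comp (eta (Im E)) (Im_map E)) a x = f a x)
                 \<longrightarrow> (\<forall>a y. y \<in> ob (Lsh (Im E)) a \<longrightarrow> g a y = h a y)))"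
proof (intro conjI allI impI sheaf_of_monos_Lsh_Im psh_hom_unit[OF assms(2)]; elim conjE)
  fix F :: "('l option, 'y) psh" and f
  assume F: "sheaf_of_monos F" and f: "psh_hom E F f"
  show "\<exists>g. psh_hom (Lsh (Im E)) F g \<and>
      (\<forall>a x. x \<in> ob E a \<longrightarrow> hom_comp g (hom_comp (eta (Im E)) (Im_map E)) a x = f a x)"
    using psh_hom_factor[OF assms(1) F f] factor_unit[OF F f] by blast
  fix g h a y
  assume "psh_hom (Lsh (Im E)) F g" "psh_hom (Lsh (Im E)) F h"
    "\<forall>a x. x \<in> ob E a \<longrightarrow> hom_comp g (hom_comp (eta (Im E)) (Im_map E)) a x = f a x"
    "\<forall>a x. x \<in> ob E a \<longrightarrow> hom_comp h (hom_comp (eta (Im E)) (Im_map E)) a x = f a x"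
    "y \<in> ob (Lsh (Im E)) a"
  then show "g a y = h a y"
    using hom_eq_factor[OF assms(2) F] by metis
qed

end
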